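(* Let $\mathcal L$ be a list of Ferrers diagrams (partitions) such that no shape in the list is a subshape of another shape in the list. Let $N(n;\mathcal L)$ be the number of standard Young tableaux with $n$ cells which have a subtableau whose shape is in $\mathcal L$, and let $t_n$ be the number of all standard Young tableaux with $n$ cells. Then \[\lim_{n\to\infty}\frac{N(n;\mathcal L)}{t_n}=\sum_{\lambda\in\mathcal L}\frac{(f^{\lambda})^2}{|\lambda|!},\] where $|\lambda|$ is the number of cells of $\lambda$ and $f^\lambda$ is the number of standard Young tableaux of shape $\lambda$.
   Context: A standard Young tableau with $n$ cells is a Ferrers diagram of some partition of $n$ filled bijectively with $1,\dots,n$ so that entries increase along rows and down columns. For a standard Young tableau $U$ with $n$ cells and $k\le n$, the subtableau of $U$ in the letters $1,\dots,k$ is the tableau formed by the cells of $U$ containing $1,\dots,k$ (with those entries); a subtableau of $U$ means such a subtableau for some $k\le n$. A shape $\mu$ is a subshape of $\lambda$ if the Ferrers diagram of $\mu$ is contained in that of $\lambda$. *)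

theory Defs
  imports Complex_Main
begin

text \<open>A partition (shape) is a weakly decreasing list of positive integers (its row lengths).
  Its Ferrers diagram is the set of cells (row, column), 0-indexed.\<close>

definition is_partition :: "nat list \<Rightarrow> bool" where
  "is_partition lam \<longleftrightarrow> sorted_wrt (\<ge>) lam \<and> (\<forall>x\<in>set lam. 0 < x)"

definition ferrers :: "nat list \<Rightarrow> (nat \<times> nat) set" where
  "ferrers lam = {(i, j). i < length lam \<and> j < lam ! i}"

definition subshape :: "nat list \<Rightarrow> nat list \<Rightarrow> bool" where
  "subshape mu lam \<longleftrightarrow> ferrers mu \<subseteq> ferrers lam"

definition is_SYT :: "nat \<Rightarrow> (nat \<times> nat \<rightharpoonup> nat) \<Rightarrow> bool" where
  "is_SYT n T \<longleftrightarrow>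
     (\<exists>lam. is_partition lam \<and> dom T = ferrers lam) \<and>
     inj_on T (dom T) \<and> ran T = {1..n} \<and>
     (\<forall>i j. (i, Suc j) \<in> dom T \<longrightarrow> the (T (i, j)) < the (T (i, Suc j))) \<and>
     (\<forall>i j. (Suc i, j) \<in> dom T \<longrightarrow> the (T (i, j)) < the (T (Suc i, j)))"

definition subtableau :: "nat \<Rightarrow> (nat \<times> nat \<rightharpoonup> nat) \<Rightarrow> (nat \<times> nat \<rightharpoonup> nat)" where
  "subtableau k T = (\<lambda>c. case T c of None \<Rightarrow> None | Some v \<Rightarrow> if v \<le> k then Some v else None)"

definition num_SYT :: "nat \<Rightarrow> nat" where
  "num_SYT n = card {T. is_SYT n T}"

definition num_SYT_shape :: "nat list \<Rightarrow> nat" where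
  "num_SYT_shape lam = card {T. is_SYT (sum_list lam) T \<and> dom T = ferrers lam}"

definition N_avoid :: "nat \<Rightarrow> nat list list \<Rightarrow> nat" where
  "N_avoid n L = card {T. is_SYT n T \<and>
      (\<exists>k\<le>n. \<exists>lam\<in>set L. dom (subtableau k T) = ferrers lam)}"

end

theory Submission
  imports Defs "HOL-Real_Asymp.Real_Asymp"
begin

text \<open>
  A standard Young tableau with n cells is the same as a saturated chain
  {} = S(0) < S(1) < ... < S(n) of Young diagrams, S(k) being the cells with entries at most k.
  It has a subtableau of shape \<lambda> iff its chain passes through \<lambda>, and since the shapes in L
  form an antichain, a chain passes through at most one of them. Hence
  N(n; L) = sum over \<lambda> in L of f(\<lambda>) e(\<lambda>, n - |\<lambda>|), where e(S, m) counts the chains of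
  length m starting at S.

  The commutation relation DU = UD + I of Young's lattice yields
  e(S, m) = sum over j of (m choose j) d(S, j) t(m - j), where d(S, j) counts the chains of
  length j ending at S and t(n) = e({}, n). For S a single cell this gives
  t(n + 2) = t(n + 1) + (n + 1) t(n), hence sqrt (n + 1) \<le> t(n + 1) / t(n) \<le> 1 + sqrt (n + 1).
  Consequently (m choose j) t(m - j) / t(m + k) tends to 1 / k! for j = k and to 0 for j < k,
  so e(\<lambda>, m) / t(m + |\<lambda>|) tends to d(\<lambda>, |\<lambda>|) / |\<lambda>|! = f(\<lambda>) / |\<lambda>|!.
\<close>

section \<open>Young diagrams\<close>

definition young_diagram :: "(nat \<times> nat) set \<Rightarrow> bool" where
  "young_diagram S \<longleftrightarrow> finite S \<and>
     (\<forall>i j i' j'. (i, j) \<in> S \<longrightarrow> i' \<le> i \<longrightarrow> j' \<le> j \<longrightarrow> (i', j') \<in> S)"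

lemma young_diagramD: "young_diagram S \<Longrightarrow> (i, j) \<in> S \<Longrightarrow> i' \<le> i \<Longrightarrow> j' \<le> j \<Longrightarrow> (i', j') \<in> S"
  unfolding young_diagram_def by blast

lemma young_diagram_finite: "young_diagram S \<Longrightarrow> finite S"
  by (simp add: young_diagram_def)

lemma young_diagram_empty: "young_diagram {}"
  by (simp add: young_diagram_def)

lemma young_diagram_single_corner: "young_diagram {(0, 0)}"
  by (simp add: young_diagram_def)

lemma young_diagram_Un: "young_diagram A \<Longrightarrow> young_diagram B \<Longrightarrow> young_diagram (A \<union> B)"
  unfolding young_diagram_def by blast

lemma young_diagram_Int: "young_diagram A \<Longrightarrow> young_diagram B \<Longrightarrow> young_diagram (A \<inter> B)"
  unfolding young_diagram_def by blast

lemma young_diagram_cell_less_card: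
  assumes "young_diagram S" "(i, j) \<in> S"
  shows "i < card S" "j < card S"
proof -
  have "(\<lambda>i'. (i', 0)) ` {..i} \<subseteq> S" "(\<lambda>j'. (i, j')) ` {..j} \<subseteq> S"
    using young_diagramD[OF assms] by auto
  then have "card ((\<lambda>i'. (i', 0::nat)) ` {..i}) \<le> card S" "card ((\<lambda>j'. (i, j')) ` {..j}) \<le> card S"
    using young_diagram_finite[OF assms(1)] by (auto intro: card_mono)
  then show "i < card S" "j < card S"
    by (simp_all add: card_image inj_on_def)
qed

lemma downward_closed_eq_lessThan:
  fixes A :: "nat set"
  assumes "finite A" "\<And>x y. x \<in> A \<Longrightarrow> y \<le> x \<Longrightarrow> y \<in> A"
  shows "A = {..<card A}"
proof -
  have "A \<subseteq> {..<card A}"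
  proof
    fix x assume "x \<in> A"
    then have "card {..x} \<le> card A"
      using assms by (intro card_mono) auto
    then show "x \<in> {..<card A}" by simp
  qed
  then show ?thesis
    using card_subset_eq[of "{..<card A}" A] by auto
qed

definition row_length :: "(nat \<times> nat) set \<Rightarrow> nat \<Rightarrow> nat" where
  "row_length S i = card {j. (i, j) \<in> S}"

lemma mem_iff_less_row_length:
  assumes "young_diagram S"
  shows "(i, j) \<in> S \<longleftrightarrow> j < row_length S i"
proof -
  have "{j. (i, j) \<in> S} \<subseteq> snd ` S" by force
  then have "finite {j. (i, j) \<in> S}"
    using young_diagram_finite[OF assms] finite_subset by blast
  then have "{j. (i, j) \<in> S} = {..<row_length S i}"
    unfolding row_length_def
    by (rule downward_closed_eq_lessThan) (use young_diagramD[OF assms] in auto)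
  then show ?thesis by blast
qed

lemma row_length_antimono:
  assumes "young_diagram S" "i \<le> i'"
  shows "row_length S i' \<le> row_length S i"
  using young_diagramD[OF assms(1) _ assms(2)] mem_iff_less_row_length[OF assms(1)]
  by (meson not_less order_refl)

definition addable :: "(nat \<times> nat) set \<Rightarrow> (nat \<times> nat) set" where
  "addable S = {c. c \<notin> S \<and> young_diagram (insert c S)}"

definition removable :: "(nat \<times> nat) set \<Rightarrow> (nat \<times> nat) set" where
  "removable S = {r \<in> S. young_diagram (S - {r})}"

lemma finite_removable: "young_diagram S \<Longrightarrow> finite (removable S)"
  unfolding removable_def using young_diagram_finite by auto

lemma finite_addable:
  assumes "young_diagram S"
  shows "finite (addable S)"
proof -
  have "addable S \<subseteq> {..card S} \<times> {..card S}"
  proof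
    fix c assume c: "c \<in> addable S"
    then have "young_diagram (insert c S)" "card (insert c S) = Suc (card S)"
      using young_diagram_finite[OF assms] by (auto simp: addable_def)
    then show "c \<in> {..card S} \<times> {..card S}"
      using young_diagram_cell_less_card[of "insert c S" "fst c" "snd c"]
      by (simp add: mem_Times_iff less_Suc_eq_le)
  qed
  then show ?thesis using finite_subset by blast
qed

lemma addable_eq_row_ends:
  assumes S: "young_diagram S"
  shows "addable S = (\<lambda>i. (i, row_length S i)) ` {i. i = 0 \<or> row_length S i < row_length S (i - 1)}"
proof (intro equalityI subsetI)
  fix c assume c: "c \<in> addable S"
  obtain i j where c_eq: "c = (i, j)" by (cases c)
  have new: "(i, j) \<notin> S" and D: "young_diagram (insert (i, j) S)"
    using c c_eq by (auto simp: addable_def)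
  have "j = row_length S i"
  proof (rule antisym)
    show "row_length S i \<le> j" using new mem_iff_less_row_length[OF S] by simp
    show "j \<le> row_length S i"
      using young_diagramD[OF D, of i j i "row_length S i"] mem_iff_less_row_length[OF S]
      by (cases "j \<le> row_length S i") auto
  qed
  moreover have "i = 0 \<or> row_length S i < row_length S (i - 1)"
    using young_diagramD[OF D, of i j "i - 1" j] mem_iff_less_row_length[OF S] \<open>j = row_length S i\<close>
    by (cases i) auto
  ultimately show "c \<in> (\<lambda>i. (i, row_length S i)) ` {i. i = 0 \<or> row_length S i < row_length S (i - 1)}"
    using c_eq by auto
next
  fix c assume "c \<in> (\<lambda>i. (i, row_length S i)) ` {i. i = 0 \<or> row_length S i < row_length S (i - 1)}"
  then obtain i where i: "i = 0 \<or> row_length S i < row_length S (i - 1)" and c: "c = (i, row_length S i)"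
    by auto
  have "(a', b') \<in> insert c S" if ab: "(a, b) \<in> insert c S" and le: "a' \<le> a" "b' \<le> b" for a b a' b'
  proof (cases "(a, b) \<in> S")
    case True
    then show ?thesis using young_diagramD[OF S True le] by simp
  next
    case False
    then have "a = i" "b = row_length S i" using ab c by auto
    moreover have "row_length S i < row_length S a'" if "a' < i"
    proof -
      have "a' \<le> i - 1" "i \<noteq> 0" using that by auto
      then show ?thesis using i row_length_antimono[OF S, of a' "i - 1"] by simp
    qed
    ultimately show ?thesis
      using le c mem_iff_less_row_length[OF S, of a' b'] by (cases "a' = i") auto
  qed
  then have "young_diagram (insert c S)"
    using young_diagram_finite[OF S] unfolding young_diagram_def by blast
  moreover have "c \<notin> S" using c mem_iff_less_row_length[OF S] by simp
  ultimately show "c \<in> addable S" by (simp add: addable_def)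
qed

lemma removable_eq_row_ends:
  assumes S: "young_diagram S"
  shows "removable S = (\<lambda>i. (i, row_length S i - 1)) ` {i. row_length S (Suc i) < row_length S i}"
proof (intro equalityI subsetI)
  fix c assume c: "c \<in> removable S"
  obtain i j where c_eq: "c = (i, j)" by (cases c)
  have old: "(i, j) \<in> S" and D: "young_diagram (S - {(i, j)})"
    using c c_eq by (auto simp: removable_def)
  have j: "j < row_length S i" using old mem_iff_less_row_length[OF S] by simp
  have "j = row_length S i - 1"
    using young_diagramD[OF D, of i "Suc j" i j] j mem_iff_less_row_length[OF S, of i "Suc j"]
    by (cases "j = row_length S i - 1") auto
  moreover have "row_length S (Suc i) < row_length S i"
    using young_diagramD[OF D, of "Suc i" j i j] j mem_iff_less_row_length[OF S, of "Suc i" j]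
    by (cases "row_length S (Suc i) < row_length S i") auto
  ultimately show "c \<in> (\<lambda>i. (i, row_length S i - 1)) ` {i. row_length S (Suc i) < row_length S i}"
    using c_eq by auto
next
  fix c assume "c \<in> (\<lambda>i. (i, row_length S i - 1)) ` {i. row_length S (Suc i) < row_length S i}"
  then obtain i where i: "row_length S (Suc i) < row_length S i" and c: "c = (i, row_length S i - 1)"
    by auto
  have "(a', b') \<noteq> c" if ab: "(a, b) \<in> S - {c}" and le: "a' \<le> a" "b' \<le> b" for a b a' b'
  proof
    assume eq: "(a', b') = c"
    have b: "b < row_length S a" using ab mem_iff_less_row_length[OF S] by auto
    moreover have "row_length S a \<le> row_length S i"
      using row_length_antimono[OF S] le eq c by auto
    ultimately have "b = row_length S i - 1" using le eq c by auto
    moreover have "row_length S a \<le> row_length S (Suc i)" if "a \<noteq> i"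
      using row_length_antimono[OF S] le eq c that by auto
    ultimately show False using ab b c i by (cases "a = i") auto
  qed
  then have "young_diagram (S - {c})"
    using young_diagram_finite[OF S] young_diagramD[OF S] unfolding young_diagram_def by blast
  moreover have "c \<in> S" using c i mem_iff_less_row_length[OF S] by simp
  ultimately show "c \<in> removable S" by (simp add: removable_def)
qed

lemma card_addable:
  assumes S: "young_diagram S"
  shows "card (addable S) = Suc (card (removable S))"
proof -
  let ?R = "{i. row_length S (Suc i) < row_length S i}"
  have "?R \<subseteq> {..<card S}"
    using mem_iff_less_row_length[OF S] young_diagram_cell_less_card[OF S] by fastforce
  then have "finite ?R" using finite_subset by blast
  have rows: "{i. i = 0 \<or> row_length S i < row_length S (i - 1)} = insert 0 (Suc ` ?R)"
  proof (intro equalityI subsetI)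
    fix i assume "i \<in> {i. i = 0 \<or> row_length S i < row_length S (i - 1)}"
    then show "i \<in> insert 0 (Suc ` ?R)" by (cases i) auto
  qed auto
  have "card (addable S) = card (insert 0 (Suc ` ?R))"
    unfolding addable_eq_row_ends[OF S] rows by (intro card_image) (auto simp: inj_on_def)
  also have "\<dots> = Suc (card ?R)" using \<open>finite ?R\<close> by (auto simp: card_image)
  also have "card ?R = card (removable S)"
    unfolding removable_eq_row_ends[OF S] by (rule card_image[symmetric]) (auto simp: inj_on_def)
  finally show ?thesis .
qed

section \<open>Chains in Young's lattice\<close>

text \<open>Starting from \<open>A = {}\<close>, such a list of cells is a standard Young tableau, the k-th cell
  of the list carrying the entry k.\<close>

fun young_chain :: "(nat \<times> nat) set \<Rightarrow> (nat \<times> nat) list \<Rightarrow> bool" where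
  "young_chain A [] \<longleftrightarrow> True"
| "young_chain A (c # cs) \<longleftrightarrow> c \<notin> A \<and> young_diagram (insert c A) \<and> young_chain (insert c A) cs"

lemma young_chain_append:
  "young_chain A (xs @ ys) \<longleftrightarrow> young_chain A xs \<and> young_chain (A \<union> set xs) ys"
  by (induction xs arbitrary: A) auto

lemma young_chain_distinct: "young_chain A cs \<Longrightarrow> distinct cs \<and> set cs \<inter> A = {}"
  by (induction cs arbitrary: A) auto

lemma young_chain_young_diagram:
  "young_chain A cs \<Longrightarrow> young_diagram A \<Longrightarrow> young_diagram (A \<union> set cs)"
proof (induction cs arbitrary: A)
  case (Cons c cs)
  then show ?case using Cons.IH[of "insert c A"] by simp
qed simp

lemma young_chain_take:
  assumes "young_chain A cs" "young_diagram A"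
  shows "young_diagram (A \<union> set (take k cs))"
  using assms young_chain_append[of A "take k cs" "drop k cs"] young_chain_young_diagram by simp

lemma young_chainI:
  assumes "distinct cs" "set cs \<inter> A = {}"
    and "\<And>k. 0 < k \<Longrightarrow> k \<le> length cs \<Longrightarrow> young_diagram (A \<union> set (take k cs))"
  shows "young_chain A cs"
  using assms
proof (induction cs arbitrary: A)
  case (Cons c cs)
  have "young_diagram (insert c A \<union> set (take k cs))" if "0 < k" "k \<le> length cs" for k
    using Cons.prems(3)[of "Suc k"] that by simp
  then have "young_chain (insert c A) cs"
    using Cons.prems(1,2) by (intro Cons.IH) auto
  then show ?case using Cons.prems(2) Cons.prems(3)[of 1] by simp
qed simp

section \<open>Counting chains\<close>

definition chains_up :: "(nat \<times> nat) set \<Rightarrow> nat \<Rightarrow> (nat \<times> nat) list set" where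
  "chains_up S m = {cs. length cs = m \<and> young_chain S cs}"

definition chains_down :: "(nat \<times> nat) set \<Rightarrow> nat \<Rightarrow> (nat \<times> nat) list set" where
  "chains_down S j =
     {cs. length cs = j \<and> set cs \<subseteq> S \<and> young_diagram (S - set cs) \<and> young_chain (S - set cs) cs}"

definition num_up :: "(nat \<times> nat) set \<Rightarrow> nat \<Rightarrow> nat" where
  "num_up S m = card (chains_up S m)"

definition num_down :: "(nat \<times> nat) set \<Rightarrow> nat \<Rightarrow> nat" where
  "num_down S j = card (chains_down S j)"

lemma finite_chains_up:
  assumes S: "young_diagram S"
  shows "finite (chains_up S m)"
proof -
  let ?B = "{..<card S + m} \<times> {..<card S + m}"
  have "set cs \<subseteq> ?B" if cs: "cs \<in> chains_up S m" for cs
  proof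
    fix c assume c: "c \<in> set cs"
    have D: "young_diagram (S \<union> set cs)" and len: "length cs = m"
      using cs young_chain_young_diagram[OF _ S] by (auto simp: chains_up_def)
    have "card (S \<union> set cs) \<le> card S + m"
      using card_Un_le[of S "set cs"] card_length[of cs] len by linarith
    then show "c \<in> ?B"
      using young_diagram_cell_less_card[OF D, of "fst c" "snd c"] c
      by (simp add: mem_Times_iff)
  qed
  then have "chains_up S m \<subseteq> {cs. set cs \<subseteq> ?B \<and> length cs = m}"
    by (auto simp: chains_up_def)
  moreover have "finite {cs. set cs \<subseteq> ?B \<and> length cs = m}"
    by (rule finite_lists_length_eq) auto
  ultimately show ?thesis using finite_subset by blast
qed

lemma finite_chains_down:
  assumes "young_diagram S"
  shows "finite (chains_down S j)"
proof -
  have "chains_down S j \<subseteq> {cs. set cs \<subseteq> S \<and> length cs = j}"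
    by (auto simp: chains_down_def)
  moreover have "finite {cs. set cs \<subseteq> S \<and> length cs = j}"
    using young_diagram_finite[OF assms] by (rule finite_lists_length_eq)
  ultimately show ?thesis using finite_subset by blast
qed

lemma num_up_0 [simp]: "num_up S 0 = 1"
proof -
  have "chains_up S 0 = {[]}" by (auto simp: chains_up_def)
  then show ?thesis by (simp add: num_up_def)
qed

lemma num_down_0 [simp]: "young_diagram S \<Longrightarrow> num_down S 0 = 1"
proof -
  assume "young_diagram S"
  then have "chains_down S 0 = {[]}" by (auto simp: chains_down_def)
  then show ?thesis by (simp add: num_down_def)
qed

lemma num_down_eq_0:
  assumes "young_diagram S" "card S < j"
  shows "num_down S j = 0"
proof -
  have "j \<le> card S" if "cs \<in> chains_down S j" for cs
  proof -
    have "distinct cs" "set cs \<subseteq> S" "length cs = j"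
      using that young_chain_distinct by (auto simp: chains_down_def)
    then show ?thesis
      using card_mono[OF young_diagram_finite[OF assms(1)]] distinct_card by metis
  qed
  then have "chains_down S j = {}" using assms(2) by fastforce
  then show ?thesis by (simp add: num_down_def)
qed

lemma num_up_Suc:
  assumes S: "young_diagram S"
  shows "num_up S (Suc m) = (\<Sum>c\<in>addable S. num_up (insert c S) m)"
proof -
  have eq: "chains_up S (Suc m) = (\<lambda>(c, cs). c # cs) ` (SIGMA c:addable S. chains_up (insert c S) m)"
  proof (intro equalityI subsetI)
    fix cs assume "cs \<in> chains_up S (Suc m)"
    then obtain c cs' where "cs = c # cs'" "length cs' = m" "young_chain S (c # cs')"
      by (auto simp: chains_up_def length_Suc_conv)
    then show "cs \<in> (\<lambda>(c, cs). c # cs) ` (SIGMA c:addable S. chains_up (insert c S) m)"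
      by (auto simp: chains_up_def addable_def image_iff intro!: bexI[of _ "(c, cs')"])
  qed (auto simp: chains_up_def addable_def)
  have "num_up S (Suc m) = card (SIGMA c:addable S. chains_up (insert c S) m)"
    unfolding num_up_def eq by (rule card_image) (auto simp: inj_on_def)
  also have "\<dots> = (\<Sum>c\<in>addable S. num_up (insert c S) m)"
    unfolding num_up_def using finite_addable[OF S]
    by (intro card_SigmaI) (auto intro: finite_chains_up simp: addable_def)
  finally show ?thesis .
qed

lemma num_down_Suc:
  assumes S: "young_diagram S"
  shows "num_down S (Suc j) = (\<Sum>r\<in>removable S. num_down (S - {r}) j)"
proof -
  have eq: "chains_down S (Suc j) = (\<lambda>(r, xs). xs @ [r]) ` (SIGMA r:removable S. chains_down (S - {r}) j)"
  proof (intro equalityI subsetI)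
    fix cs assume cs: "cs \<in> chains_down S (Suc j)"
    then obtain xs r where cs_eq: "cs = xs @ [r]" and len: "length xs = j"
      by (auto simp: chains_down_def length_Suc_conv_rev)
    let ?B = "S - set cs"
    have B: "young_diagram ?B" "young_chain ?B cs" "set cs \<subseteq> S"
      using cs by (auto simp: chains_down_def)
    have r: "r \<notin> set xs" using B(2) young_chain_distinct cs_eq by fastforce
    have xs: "young_chain ?B xs" using B(2) cs_eq young_chain_append by simp
    have "?B \<union> set xs = S - {r}" using B(3) cs_eq r by auto
    then have "young_diagram (S - {r})" using young_chain_young_diagram[OF xs B(1)] by simp
    then have "r \<in> removable S" using B(3) cs_eq by (auto simp: removable_def)
    moreover have "xs \<in> chains_down (S - {r}) j"
    proof -
      have "S - {r} - set xs = ?B" using cs_eq by auto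
      then show ?thesis using cs_eq B xs r len by (auto simp: chains_down_def)
    qed
    ultimately show "cs \<in> (\<lambda>(r, xs). xs @ [r]) ` (SIGMA r:removable S. chains_down (S - {r}) j)"
      using cs_eq by (auto simp: image_iff intro!: bexI[of _ "(r, xs)"])
  next
    fix cs assume "cs \<in> (\<lambda>(r, xs). xs @ [r]) ` (SIGMA r:removable S. chains_down (S - {r}) j)"
    then obtain r xs where cs_eq: "cs = xs @ [r]" and r: "r \<in> removable S"
      and xs: "xs \<in> chains_down (S - {r}) j" by auto
    have "r \<in> S" using r by (simp add: removable_def)
    have "S - set cs = S - {r} - set xs" "S - {r} - set xs \<union> set xs = S - {r}"
      using cs_eq xs by (auto simp: chains_down_def)
    moreover have "insert r (S - {r}) = S" using \<open>r \<in> S\<close> by auto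
    ultimately show "cs \<in> chains_down S (Suc j)"
      using xs r S cs_eq by (auto simp: chains_down_def removable_def young_chain_append)
  qed
  have "num_down S (Suc j) = card (SIGMA r:removable S. chains_down (S - {r}) j)"
    unfolding num_down_def eq by (rule card_image) (auto simp: inj_on_def)
  also have "\<dots> = (\<Sum>r\<in>removable S. num_down (S - {r}) j)"
    unfolding num_down_def using finite_removable[OF S]
    by (intro card_SigmaI) (auto intro: finite_chains_down simp: removable_def)
  finally show ?thesis .
qed

section \<open>The commutation relation\<close>

lemma removable_insert_addable:
  "young_diagram S \<Longrightarrow> c \<in> addable S \<Longrightarrow> c \<in> removable (insert c S)"
  by (auto simp: addable_def removable_def)

lemma addable_Diff_removable:
  "young_diagram S \<Longrightarrow> r \<in> removable S \<Longrightarrow> r \<in> addable (S - {r})"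
  by (auto simp: addable_def removable_def insert_absorb)

lemma addable_removable_commute:
  assumes S: "young_diagram S" and "c \<noteq> r"
  shows "c \<in> addable S \<and> r \<in> removable (insert c S) \<longleftrightarrow> r \<in> removable S \<and> c \<in> addable (S - {r})"
proof -
  have swap: "insert c S - {r} = insert c (S - {r})" using \<open>c \<noteq> r\<close> by auto
  show ?thesis
  proof
    assume "c \<in> addable S \<and> r \<in> removable (insert c S)"
    then have c: "c \<notin> S" and r: "r \<in> S" and D: "young_diagram (insert c (S - {r}))"
      using \<open>c \<noteq> r\<close> by (auto simp: addable_def removable_def swap)
    have "S - {r} = S \<inter> insert c (S - {r})" using c by blast
    then have "young_diagram (S - {r})" using young_diagram_Int[OF S D] by simp
    then show "r \<in> removable S \<and> c \<in> addable (S - {r})"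
      using c r D by (simp add: addable_def removable_def)
  next
    assume "r \<in> removable S \<and> c \<in> addable (S - {r})"
    then have r: "r \<in> S" and c: "c \<notin> S" and D: "young_diagram (insert c (S - {r}))"
      using \<open>c \<noteq> r\<close> by (auto simp: addable_def removable_def)
    have "insert c S = S \<union> insert c (S - {r})" using r by blast
    then have "young_diagram (insert c S)" using young_diagram_Un[OF S D] by simp
    then show "c \<in> addable S \<and> r \<in> removable (insert c S)"
      using c r D by (simp add: addable_def removable_def swap)
  qed
qed

lemma sum_addable_removable_swap:
  assumes S: "young_diagram S"
  shows "(\<Sum>c\<in>addable S. \<Sum>r\<in>removable (insert c S) - {c}. g (insert c S - {r}))
       = (\<Sum>r\<in>removable S. \<Sum>c\<in>addable (S - {r}) - {r}. g (insert c (S - {r})))"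
proof -
  have "(\<Sum>c\<in>addable S. \<Sum>r\<in>removable (insert c S) - {c}. g (insert c S - {r}))
      = (\<Sum>(c, r)\<in>(SIGMA c:addable S. removable (insert c S) - {c}). g (insert c S - {r}))"
    using finite_addable[OF S] by (rule sum.Sigma) (auto intro: finite_removable simp: addable_def)
  also have "\<dots> = (\<Sum>(r, c)\<in>(SIGMA r:removable S. addable (S - {r}) - {r}). g (insert c (S - {r})))"
  proof (rule sum.reindex_bij_witness[where i = prod.swap and j = prod.swap])
    fix p assume "p \<in> (SIGMA r:removable S. addable (S - {r}) - {r})"
    then show "prod.swap p \<in> (SIGMA c:addable S. removable (insert c S) - {c})"
      using addable_removable_commute[OF S, of "snd p" "fst p"] by (cases p) auto
  next
    fix p assume "p \<in> (SIGMA c:addable S. removable (insert c S) - {c})"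
    then show "prod.swap p \<in> (SIGMA r:removable S. addable (S - {r}) - {r})"
      and "(case prod.swap p of (r, c) \<Rightarrow> g (insert c (S - {r}))) = (case p of (c, r) \<Rightarrow> g (insert c S - {r}))"
      using addable_removable_commute[OF S, of "fst p" "snd p"] by (cases p; auto simp: insert_Diff_if)+
  qed simp_all
  also have "\<dots> = (\<Sum>r\<in>removable S. \<Sum>c\<in>addable (S - {r}) - {r}. g (insert c (S - {r})))"
    using finite_removable[OF S]
    by (rule sum.Sigma[symmetric]) (auto intro: finite_addable simp: removable_def)
  finally show ?thesis .
qed

lemma num_down_Suc_insert:
  assumes "young_diagram S" "c \<in> addable S"
  shows "num_down (insert c S) (Suc j)
       = num_down S j + (\<Sum>r\<in>removable (insert c S) - {c}. num_down (insert c S - {r}) j)"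
proof -
  have D: "young_diagram (insert c S)" and "c \<notin> S" using assms(2) by (auto simp: addable_def)
  have "num_down (insert c S) (Suc j)
      = num_down (insert c S - {c}) j + (\<Sum>r\<in>removable (insert c S) - {c}. num_down (insert c S - {r}) j)"
    unfolding num_down_Suc[OF D]
    by (rule sum.remove[OF finite_removable[OF D] removable_insert_addable[OF assms]])
  then show ?thesis using \<open>c \<notin> S\<close> by simp
qed

text \<open>Both sides of \<open>D\<^sup>j U = U D\<^sup>j + j D\<^sup>j\<^sup>-\<^sup>1\<close>, a consequence of \<open>DU = UD + I\<close>, counted at S;
  on the right, \<open>card_addable\<close> turns the count of \<open>U D\<^sup>j\<close> into that of \<open>D\<^sup>j\<^sup>+\<^sup>1 + D\<^sup>j\<close>.\<close>

lemma sum_num_down_addable: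
  assumes "young_diagram S"
  shows "(\<Sum>c\<in>addable S. num_down (insert c S) j)
       = num_down S (Suc j) + num_down S j + j * num_down S (j - 1)"
  using assms
proof (induction j arbitrary: S)
  case 0
  have "(\<Sum>c\<in>addable S. num_down (insert c S) 0) = card (addable S)"
    by (simp add: addable_def)
  moreover have "num_down S (Suc 0) = card (removable S)"
    unfolding num_down_Suc[OF 0] by (simp add: removable_def)
  ultimately show ?case using card_addable[OF 0] 0 by simp
next
  case (Suc j)
  note S = Suc.prems
  define Q where "Q = (\<Sum>r\<in>removable S. \<Sum>c\<in>addable (S - {r}) - {r}. num_down (insert c (S - {r})) j)"
  have Q_removable: "num_down S j + (\<Sum>c\<in>addable (S - {r}) - {r}. num_down (insert c (S - {r})) j)
      = num_down (S - {r}) (Suc j) + num_down (S - {r}) j + j * num_down (S - {r}) (j - 1)"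
    if r: "r \<in> removable S" for r
  proof -
    have D: "young_diagram (S - {r})" and r_S: "insert r (S - {r}) = S"
      using r by (auto simp: removable_def)
    have "(\<Sum>c\<in>addable (S - {r}). num_down (insert c (S - {r})) j)
        = num_down (insert r (S - {r})) j + (\<Sum>c\<in>addable (S - {r}) - {r}. num_down (insert c (S - {r})) j)"
      by (rule sum.remove[OF finite_addable[OF D] addable_Diff_removable[OF S r]])
    then show ?thesis unfolding r_S using Suc.IH[OF D] by linarith
  qed
  have "(\<Sum>c\<in>addable S. num_down (insert c S) (Suc j)) = card (addable S) * num_down S j + Q"
    unfolding Q_def
    by (simp add: num_down_Suc_insert[OF S] sum.distrib sum_addable_removable_swap[OF S, of "\<lambda>T. num_down T j"] cong: sum.cong)
  moreover have "card (removable S) * num_down S j + Q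
      = num_down S (Suc (Suc j)) + num_down S (Suc j) + j * num_down S j"
  proof -
    have "card (removable S) * num_down S j + Q = (\<Sum>r\<in>removable S.
        num_down S j + (\<Sum>c\<in>addable (S - {r}) - {r}. num_down (insert c (S - {r})) j))"
      unfolding Q_def by (simp add: sum.distrib)
    also have "\<dots> = (\<Sum>r\<in>removable S.
        num_down (S - {r}) (Suc j) + num_down (S - {r}) j + j * num_down (S - {r}) (j - 1))"
      by (rule sum.cong) (simp_all add: Q_removable)
    also have "\<dots> = num_down S (Suc (Suc j)) + num_down S (Suc j) + j * num_down S j"
      using num_down_Suc[OF S] by (cases j) (simp_all add: sum.distrib sum_distrib_left)
    finally show ?thesis .
  qed
  ultimately show ?case using card_addable[OF S] by simp
qed

lemma binomial_convolution_Suc: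
  fixes t d :: "nat \<Rightarrow> nat"
  assumes t: "\<And>q. q \<le> n \<Longrightarrow> t (Suc q) = t q + q * t (q - 1)"
  shows "(\<Sum>j\<le>n. (n choose j) * t (n - j) * (d (Suc j) + d j + j * d (j - 1)))
       = (\<Sum>i\<le>Suc n. (Suc n choose i) * d i * t (Suc n - i))"
proof -
  define A where "A = (\<Sum>j\<le>n. (n choose j) * d (Suc j) * t (n - j))"
  define B where "B = (\<Sum>i\<le>n. (n choose i) * d i * t (n - i))"
  define C where "C = (\<Sum>i\<le>n. (n choose i) * (n - i) * d i * t (n - i - 1))"
  have C_shift: "(\<Sum>j\<le>n. (n choose j) * t (n - j) * (j * d (j - 1))) = C"
  proof (cases n)
    case (Suc p)
    have binom: "(Suc p choose Suc i) * Suc i = (Suc p choose i) * (Suc p - i)" for i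
      using Suc_times_binomial[of i p] binomial_absorb_comp[of "Suc p" i] by (simp add: mult.commute)
    have "(\<Sum>j\<le>n. (n choose j) * t (n - j) * (j * d (j - 1)))
        = (\<Sum>i\<le>p. ((Suc p choose Suc i) * Suc i) * d i * t (p - i))"
      unfolding Suc sum.atMost_Suc_shift by (simp add: algebra_simps del: binomial_Suc_Suc)
    also have "\<dots> = (\<Sum>i\<le>Suc p. (Suc p choose i) * (Suc p - i) * d i * t (p - i))"
      unfolding binom sum.atMost_Suc[of _ p] by simp
    finally show ?thesis unfolding C_def Suc by simp
  qed (simp add: C_def)
  have "(\<Sum>i\<le>Suc n. (Suc n choose i) * d i * t (Suc n - i))
      = (\<Sum>i\<le>Suc n. (n choose i) * d i * t (Suc n - i)) + A"
    unfolding A_def sum.atMost_Suc_shift[of _ n] by (simp add: algebra_simps sum.distrib)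
  also have "(\<Sum>i\<le>Suc n. (n choose i) * d i * t (Suc n - i))
      = (\<Sum>i\<le>n. (n choose i) * d i * t (Suc (n - i)))"
    by (simp add: sum.atMost_Suc Suc_diff_le)
  also have "\<dots> = (\<Sum>i\<le>n. (n choose i) * d i * (t (n - i) + (n - i) * t (n - i - 1)))"
    by (rule sum.cong) (simp_all add: t)
  also have "\<dots> = B + C"
    unfolding B_def C_def sum.distrib[symmetric]
    by (intro sum.cong) (simp_all add: distrib_left ac_simps)
  finally show ?thesis
    using C_shift unfolding A_def B_def by (simp add: algebra_simps sum.distrib)
qed

lemma addable_empty: "addable {} = {(0, 0)}"
proof -
  have "c = (0, 0)" if "young_diagram {c}" for c
    using young_diagramD[OF that, of "fst c" "snd c" 0 0] by auto
  then show ?thesis by (auto simp: addable_def young_diagram_single_corner)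
qed

lemma num_up_empty_Suc: "num_up {} (Suc q) = num_up {(0, 0)} q"
  using num_up_Suc[OF young_diagram_empty] by (simp add: addable_empty)

lemma num_down_single_corner: "num_down {(0, 0)} j = (if j \<le> 1 then 1 else 0)"
proof -
  have "removable {(0, 0)} = {(0, 0)}"
    by (auto simp: removable_def young_diagram_empty)
  then have "num_down {(0, 0)} (Suc 0) = 1"
    using num_down_Suc[OF young_diagram_single_corner, of 0] by (simp add: young_diagram_empty)
  then show ?thesis
    using num_down_eq_0[OF young_diagram_single_corner, of j] young_diagram_single_corner
    by (auto simp: le_Suc_eq)
qed

lemma sum_num_down_single_corner:
  "(\<Sum>j\<le>q. (q choose j) * num_down {(0, 0)} j * f (q - j)) = f q + q * f (q - 1)"
proof -
  have "(\<Sum>j\<le>q. (q choose j) * num_down {(0, 0)} j * f (q - j))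
      = (\<Sum>j\<in>{..min q 1}. (q choose j) * f (q - j))"
    by (rule sum.mono_neutral_cong_right) (auto simp: num_down_single_corner)
  then show ?thesis by (cases q) (simp_all add: atMost_Suc)
qed

theorem num_up_expansion:
  assumes "young_diagram S"
  shows "num_up S m = (\<Sum>j\<le>m. (m choose j) * num_down S j * num_up {} (m - j))"
  using assms
proof (induction m arbitrary: S rule: less_induct)
  case (less m)
  show ?case
  proof (cases m)
    case 0
    then show ?thesis using less.prems by simp
  next
    case (Suc n)
    have rec: "num_up {} (Suc q) = num_up {} q + q * num_up {} (q - 1)" if "q \<le> n" for q
      using less.IH[OF _ young_diagram_single_corner, of q] that Suc
      by (simp add: num_up_empty_Suc sum_num_down_single_corner)
    have "num_up S m
        = (\<Sum>c\<in>addable S. \<Sum>j\<le>n. (n choose j) * num_down (insert c S) j * num_up {} (n - j))"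
      unfolding Suc num_up_Suc[OF less.prems]
      by (intro sum.cong) (auto simp: Suc addable_def intro!: less.IH)
    also have "\<dots> = (\<Sum>j\<le>n. (n choose j) * num_up {} (n - j) * (\<Sum>c\<in>addable S. num_down (insert c S) j))"
      by (subst sum.swap) (simp add: sum_distrib_left ac_simps)
    also have "\<dots> = (\<Sum>j\<le>n. (n choose j) * num_up {} (n - j)
        * (num_down S (Suc j) + num_down S j + j * num_down S (j - 1)))"
      using sum_num_down_addable[OF less.prems] by simp
    also have "\<dots> = (\<Sum>j\<le>m. (m choose j) * num_down S j * num_up {} (m - j))"
      unfolding Suc by (rule binomial_convolution_Suc[OF rec])
    finally show ?thesis .
  qed
qed

lemma num_up_empty_Suc_Suc:
  "num_up {} (Suc (Suc q)) = num_up {} (Suc q) + Suc q * num_up {} q"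
  using num_up_expansion[OF young_diagram_single_corner, of "Suc q"]
  by (simp add: num_up_empty_Suc sum_num_down_single_corner)

section \<open>Telephone numbers\<close>

fun telephone :: "nat \<Rightarrow> nat" where
  "telephone 0 = 1"
| "telephone (Suc 0) = 1"
| "telephone (Suc (Suc n)) = telephone (Suc n) + Suc n * telephone n"

lemma num_up_empty_eq_telephone: "num_up {} n = telephone n"
proof (induction n rule: telephone.induct)
  case 2
  show ?case by (simp add: num_up_empty_Suc)
qed (simp_all add: num_up_empty_Suc_Suc)

lemma telephone_pos: "0 < telephone n"
  by (induction n rule: telephone.induct) simp_all

lemma telephone_neq_0 [simp]: "telephone n \<noteq> 0"
  using telephone_pos by (rule gr_implies_not0)

lemma telephone_mono: "m \<le> n \<Longrightarrow> telephone m \<le> telephone n"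
proof (induction n rule: dec_induct)
  case (step n)
  then show ?case by (cases n) simp_all
qed simp

lemma sqrt_Suc_square_mult_le:
  fixes s :: real
  assumes "0 \<le> s"
  shows "sqrt (s\<^sup>2 + 1) * (1 + s) \<le> s\<^sup>2 + s + 1"
proof (rule power2_le_imp_le)
  have "(sqrt (s\<^sup>2 + 1) * (1 + s))\<^sup>2 + s\<^sup>2 = (s\<^sup>2 + s + 1)\<^sup>2"
    by (simp add: power_mult_distrib power2_eq_square algebra_simps)
  then show "(sqrt (s\<^sup>2 + 1) * (1 + s))\<^sup>2 \<le> (s\<^sup>2 + s + 1)\<^sup>2"
    using zero_le_power2[of s] by linarith
qed (use assms in simp)

lemma telephone_ratio_bounds:
  "sqrt (Suc n) * telephone n \<le> telephone (Suc n)"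
  "telephone (Suc n) \<le> (1 + sqrt (Suc n)) * telephone n"
proof (induction n)
  case 0
  show "sqrt (Suc 0) * telephone 0 \<le> telephone (Suc 0)"
    and "telephone (Suc 0) \<le> (1 + sqrt (Suc 0)) * telephone 0" by simp_all
next
  case (Suc n)
  define s where "s = sqrt (Suc n)"
  have "0 \<le> s" and s_sq: "s\<^sup>2 = Suc n" and s': "sqrt (Suc (Suc n)) = sqrt (s\<^sup>2 + 1)"
    by (simp_all add: s_def)
  have s_le: "s \<le> sqrt (s\<^sup>2 + 1)" by (simp add: s_def)
  have IH: "s * telephone n \<le> telephone (Suc n)" "telephone (Suc n) \<le> (1 + s) * telephone n"
    using Suc.IH by (simp_all add: s_def)
  have step: "real (telephone (Suc (Suc n))) = telephone (Suc n) + s\<^sup>2 * telephone n"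
    by (simp add: s_sq algebra_simps)
  have "s\<^sup>2 * telephone n \<le> s * telephone (Suc n)"
    using mult_left_mono[OF IH(1) \<open>0 \<le> s\<close>] by (simp add: power2_eq_square mult.assoc)
  also have "\<dots> \<le> sqrt (s\<^sup>2 + 1) * telephone (Suc n)"
    using s_le by (intro mult_right_mono) simp_all
  finally show "telephone (Suc (Suc n)) \<le> (1 + sqrt (Suc (Suc n))) * telephone (Suc n)"
    unfolding step s' by (simp add: algebra_simps)
  have "(sqrt (s\<^sup>2 + 1) - 1) * telephone (Suc n) \<le> (sqrt (s\<^sup>2 + 1) - 1) * ((1 + s) * telephone n)"
    using IH(2) \<open>0 \<le> s\<close> by (intro mult_left_mono) simp_all
  also have "\<dots> \<le> s\<^sup>2 * telephone n"
  proof -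
    have "(sqrt (s\<^sup>2 + 1) - 1) * (1 + s) \<le> s\<^sup>2"
      using sqrt_Suc_square_mult_le[OF \<open>0 \<le> s\<close>] by (simp add: algebra_simps)
    from mult_right_mono[OF this, of "telephone n"] show ?thesis by (simp add: mult.assoc)
  qed
  finally show "sqrt (Suc (Suc n)) * telephone (Suc n) \<le> telephone (Suc (Suc n))"
    unfolding step s' by (simp add: algebra_simps)
qed

lemma telephone_ratio_tendsto_0: "(\<lambda>n. telephone n / telephone (Suc n)) \<longlonglongrightarrow> 0"
proof (rule tendsto_sandwich[OF _ _ tendsto_const])
  show "\<forall>\<^sub>F n in sequentially. 0 \<le> telephone n / telephone (Suc n)"
    by simp
  show "\<forall>\<^sub>F n in sequentially. telephone n / telephone (Suc n) \<le> 1 / sqrt (Suc n)"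
    using telephone_ratio_bounds(1) telephone_pos
    by (intro always_eventually allI) (simp add: divide_simps mult.commute)
  show "(\<lambda>n. 1 / sqrt (Suc n)) \<longlonglongrightarrow> 0"
    by real_asymp
qed

lemma telephone_Suc_Suc_ratio_tendsto:
  "(\<lambda>n. real (Suc n) * telephone n / telephone (Suc (Suc n))) \<longlonglongrightarrow> 1"
proof -
  have small: "(\<lambda>n. telephone (Suc n) / (real (Suc n) * telephone n)) \<longlonglongrightarrow> 0"
  proof (rule tendsto_sandwich[OF _ _ tendsto_const])
    show "\<forall>\<^sub>F n in sequentially. 0 \<le> telephone (Suc n) / (real (Suc n) * telephone n)"
      by simp
    show "\<forall>\<^sub>F n in sequentially. telephone (Suc n) / (real (Suc n) * telephone n) \<le> (1 + sqrt (Suc n)) / Suc n"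
    proof (intro always_eventually allI)
      fix n
      have "telephone (Suc n) / (real (Suc n) * telephone n) \<le> (1 + sqrt (Suc n)) * telephone n / (real (Suc n) * telephone n)"
        using telephone_ratio_bounds(2)[of n] by (intro divide_right_mono) simp_all
      also have "\<dots> = (1 + sqrt (Suc n)) / Suc n"
        by simp
      finally show "telephone (Suc n) / (real (Suc n) * telephone n) \<le> (1 + sqrt (Suc n)) / Suc n" .
    qed
    show "(\<lambda>n. (1 + sqrt (Suc n)) / Suc n) \<longlonglongrightarrow> 0"
      by real_asymp
  qed
  have frac: "x / (b + x) = 1 / (1 + b / x)" if "0 < x" for x b :: real
    using that by (simp add: field_simps)
  have "real (Suc n) * telephone n / telephone (Suc (Suc n))
      = 1 / (1 + telephone (Suc n) / (real (Suc n) * telephone n))" for n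
  proof -
    have "real (telephone (Suc (Suc n))) = telephone (Suc n) + real (Suc n) * telephone n"
      by (simp only: telephone.simps of_nat_add of_nat_mult)
    then show ?thesis using telephone_pos[of n] by (simp only:) (rule frac, simp)
  qed
  moreover have "(\<lambda>n. 1 / (1 + telephone (Suc n) / (real (Suc n) * telephone n))) \<longlonglongrightarrow> 1 / (1 + 0)"
    by (intro tendsto_intros small) simp
  ultimately show ?thesis by simp
qed

lemma pochhammer_telephone_tendsto:
  "(\<lambda>p. pochhammer (real p + 1) k * telephone p / telephone (p + 2 * k)) \<longlonglongrightarrow> 1"
proof (induction k)
  case 0
  show ?case by simp
next
  case (Suc k)
  define g :: "nat \<Rightarrow> real"
    where "g p = (real p + 1 + k) * telephone (p + 2 * k) / telephone (Suc (Suc (p + 2 * k)))" for p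
  have "g = (\<lambda>p. ((real p + 1 + k) / Suc (p + 2 * k))
      * (real (Suc (p + 2 * k)) * telephone (p + 2 * k) / telephone (Suc (Suc (p + 2 * k)))))"
    by (simp add: g_def fun_eq_iff del: of_nat_Suc telephone.simps)
  moreover have "(\<lambda>p. (real p + 1 + k) / Suc (p + 2 * k)) \<longlonglongrightarrow> 1"
    by real_asymp
  moreover have "(\<lambda>p. real (Suc (p + 2 * k)) * telephone (p + 2 * k) / telephone (Suc (Suc (p + 2 * k))))
      \<longlonglongrightarrow> 1"
    using LIMSEQ_ignore_initial_segment[OF telephone_Suc_Suc_ratio_tendsto, of "2 * k"]
    by (simp add: add.commute)
  ultimately have "g \<longlonglongrightarrow> 1 * 1"
    by (simp only:) (rule tendsto_mult)
  moreover have "(\<lambda>p. pochhammer (real p + 1) (Suc k) * telephone p / telephone (p + 2 * Suc k))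
      = (\<lambda>p. (pochhammer (real p + 1) k * telephone p / telephone (p + 2 * k)) * g p)"
    by (simp add: g_def pochhammer_Suc fun_eq_iff del: telephone.simps)
  ultimately show ?case using tendsto_mult[OF Suc.IH] by simp
qed

lemma binomial_telephone_tendsto:
  assumes "j \<le> k"
  shows "(\<lambda>m. (m choose j) * telephone (m - j) / telephone (m + k)) \<longlonglongrightarrow> (if j = k then 1 / fact k else 0)"
proof -
  have same: "(\<lambda>m. (m choose j) * telephone (m - j) / telephone (m + j)) \<longlonglongrightarrow> 1 / fact j"
  proof (rule LIMSEQ_offset[where k = j])
    have "(\<lambda>p. pochhammer (real p + 1) j * telephone p / telephone (p + 2 * j) / fact j) \<longlonglongrightarrow> 1 / fact j"
      by (intro tendsto_divide pochhammer_telephone_tendsto tendsto_const) simp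
    moreover have "(p + j choose j) * telephone (p + j - j) / telephone (p + j + j)
        = pochhammer (real p + 1) j * telephone p / telephone (p + 2 * j) / fact j" for p
    proof -
      have "p + j + j = p + 2 * j" by simp
      moreover have "real (p + j choose j) = pochhammer (real p + 1) j / fact j"
        by (simp add: binomial_gbinomial gbinomial_pochhammer')
      ultimately show ?thesis by (simp only:) simp
    qed
    ultimately show "(\<lambda>p. (p + j choose j) * telephone (p + j - j) / telephone (p + j + j)) \<longlonglongrightarrow> 1 / fact j"
      by simp
  qed
  show ?thesis
  proof (cases "j = k")
    case False
    with assms have "j < k" by simp
    have "(\<lambda>m. (m choose j) * telephone (m - j) / telephone (m + k)) \<longlonglongrightarrow> 0"
    proof (rule tendsto_sandwich[OF _ _ tendsto_const])
      show "\<forall>\<^sub>F m in sequentially. 0 \<le> (m choose j) * telephone (m - j) / telephone (m + k)"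
        by simp
      show "\<forall>\<^sub>F m in sequentially. (m choose j) * telephone (m - j) / telephone (m + k)
          \<le> (m choose j) * telephone (m - j) / telephone (m + j) * (telephone (m + j) / telephone (Suc (m + j)))"
      proof (intro always_eventually allI)
        fix m
        have "telephone (Suc (m + j)) \<le> telephone (m + k)"
          using \<open>j < k\<close> by (intro telephone_mono) simp
        then show "(m choose j) * telephone (m - j) / telephone (m + k)
          \<le> (m choose j) * telephone (m - j) / telephone (m + j) * (telephone (m + j) / telephone (Suc (m + j)))"
          using telephone_pos[of "m + j"] telephone_pos[of "Suc (m + j)"]
          by (simp add: divide_left_mono)
      qed
      show "(\<lambda>m. (m choose j) * telephone (m - j) / telephone (m + j) * (telephone (m + j) / telephone (Suc (m + j))))
          \<longlonglongrightarrow> 0"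
        using tendsto_mult[OF same LIMSEQ_ignore_initial_segment[OF telephone_ratio_tendsto_0, of j]]
        by (simp add: add.commute)
    qed
    then show ?thesis using False by simp
  qed (use same in simp)
qed

lemma num_up_tendsto:
  assumes F: "young_diagram F"
  shows "(\<lambda>m. num_up F m / telephone (m + card F)) \<longlonglongrightarrow> num_down F (card F) / fact (card F)"
proof -
  let ?k = "card F"
  have expand: "num_up F m / telephone (m + ?k)
      = (\<Sum>j\<le>?k. num_down F j * ((m choose j) * telephone (m - j) / telephone (m + ?k)))"
    if "?k \<le> m" for m
  proof -
    have "num_up F m = (\<Sum>j\<le>?k. (m choose j) * num_down F j * telephone (m - j))"
      unfolding num_up_expansion[OF F] num_up_empty_eq_telephone
      by (rule sum.mono_neutral_right) (use that num_down_eq_0[OF F] in auto)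
    then show ?thesis
      by (simp add: sum_divide_distrib ac_simps)
  qed
  have ev: "\<forall>\<^sub>F m in sequentially. (\<Sum>j\<le>?k. num_down F j * ((m choose j) * telephone (m - j) / telephone (m + ?k)))
      = num_up F m / telephone (m + ?k)"
    using eventually_ge_at_top[of ?k] by (rule eventually_mono) (simp add: expand)
  have "(\<lambda>m. \<Sum>j\<le>?k. num_down F j * ((m choose j) * telephone (m - j) / telephone (m + ?k)))
      \<longlonglongrightarrow> (\<Sum>j\<le>?k. num_down F j * (if j = ?k then 1 / fact ?k else 0))"
    by (intro tendsto_sum tendsto_mult tendsto_const binomial_telephone_tendsto) simp
  also have "(\<Sum>j\<le>?k. real (num_down F j) * (if j = ?k then 1 / fact ?k else 0)) = num_down F ?k / fact ?k"
    by (simp add: if_distrib cong: if_cong)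
  finally show ?thesis using ev by (rule Lim_transform_eventually)
qed

section \<open>Standard Young tableaux as chains\<close>

lemma ferrers_eq_Sigma: "ferrers lam = (SIGMA i:{..<length lam}. {..<lam ! i})"
  by (auto simp: ferrers_def)

lemma finite_ferrers: "finite (ferrers lam)"
  by (simp add: ferrers_eq_Sigma)

lemma card_ferrers: "card (ferrers lam) = sum_list lam"
  by (simp add: ferrers_eq_Sigma card_SigmaI sum_list_sum_nth atLeast0LessThan)

lemma young_diagram_ferrers:
  assumes "is_partition lam"
  shows "young_diagram (ferrers lam)"
proof -
  have "lam ! i \<le> lam ! i'" if "i' \<le> i" "i < length lam" for i i'
    using assms that by (cases "i' = i") (auto simp: is_partition_def sorted_wrt_iff_nth_less)
  then show ?thesis
    unfolding young_diagram_def using finite_ferrers by (fastforce simp: ferrers_def)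
qed

lemma young_diagram_obtains_partition:
  assumes S: "young_diagram S"
  obtains lam where "is_partition lam" "S = ferrers lam"
proof -
  let ?C = "{i. (i, 0) \<in> S}"
  have "?C \<subseteq> fst ` S" by force
  then have "finite ?C" using young_diagram_finite[OF S] finite_subset by blast
  then have "?C = {..<card ?C}"
    by (rule downward_closed_eq_lessThan) (use young_diagramD[OF S] in auto)
  then obtain r where C: "?C = {..<r}" by blast
  define lam where "lam = map (row_length S) [0..<r]"
  have "sorted_wrt (\<ge>) lam"
    unfolding lam_def sorted_wrt_iff_nth_less using row_length_antimono[OF S] by auto
  moreover have "0 < row_length S i" if "i < r" for i
    using that C mem_iff_less_row_length[OF S, of i 0] by auto
  ultimately have "is_partition lam"
    by (auto simp: is_partition_def lam_def)
  have mem: "(i, j) \<in> S \<longleftrightarrow> i < r \<and> j < row_length S i" for i j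
    using C young_diagramD[OF S, of i j i 0] mem_iff_less_row_length[OF S, of i j] by auto
  have "S = ferrers lam"
    using mem by (auto simp: ferrers_def lam_def)
  with \<open>is_partition lam\<close> show ?thesis by (rule that)
qed

definition tableau_of_chain :: "(nat \<times> nat) list \<Rightarrow> (nat \<times> nat \<rightharpoonup> nat)" where
  "tableau_of_chain cs = map_of (zip cs [1..<Suc (length cs)])"

lemma tableau_of_chain_nth:
  "distinct cs \<Longrightarrow> i < length cs \<Longrightarrow> tableau_of_chain cs (cs ! i) = Some (Suc i)"
  unfolding tableau_of_chain_def by (subst map_of_zip_nth) (auto simp del: upt_Suc)

lemma dom_tableau_of_chain: "dom (tableau_of_chain cs) = set cs"
  unfolding tableau_of_chain_def by (simp add: dom_map_of_zip del: upt_Suc)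

lemma ran_tableau_of_chain: "distinct cs \<Longrightarrow> ran (tableau_of_chain cs) = {1..length cs}"
  unfolding tableau_of_chain_def by (subst ran_map_of_zip) (auto simp del: upt_Suc)

lemma tableau_of_chain_eq_Some_iff:
  assumes "distinct cs"
  shows "tableau_of_chain cs c = Some v \<longleftrightarrow> 0 < v \<and> v \<le> length cs \<and> cs ! (v - 1) = c"
proof
  assume "tableau_of_chain cs c = Some v"
  then have "c \<in> set cs" using dom_tableau_of_chain by blast
  then obtain i where "i < length cs" "cs ! i = c" by (auto simp: in_set_conv_nth)
  then show "0 < v \<and> v \<le> length cs \<and> cs ! (v - 1) = c"
    using tableau_of_chain_nth[OF assms] \<open>tableau_of_chain cs c = Some v\<close> by auto
qed (use tableau_of_chain_nth[OF assms, of "v - 1"] in auto)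

lemma inj_on_the_tableau_of_chain:
  assumes "distinct cs"
  shows "inj_on (\<lambda>c. the (tableau_of_chain cs c)) (set cs)"
proof (rule inj_onI)
  fix c c' assume "c \<in> set cs" "c' \<in> set cs" "the (tableau_of_chain cs c) = the (tableau_of_chain cs c')"
  moreover obtain p q where "p < length cs" "cs ! p = c" "q < length cs" "cs ! q = c'"
    using \<open>c \<in> set cs\<close> \<open>c' \<in> set cs\<close> by (auto simp: in_set_conv_nth)
  ultimately show "c = c'" using tableau_of_chain_nth[OF assms] by auto
qed

lemma inj_on_tableau_of_chain: "inj_on tableau_of_chain {cs. distinct cs}"
proof (rule inj_onI)
  fix cs ds assume cs: "cs \<in> {cs. distinct cs}" and ds: "ds \<in> {cs. distinct cs}"
    and eq: "tableau_of_chain cs = tableau_of_chain ds"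
  have "card {1..length cs} = card {1..length ds}"
    using ran_tableau_of_chain cs ds eq by (metis mem_Collect_eq)
  then have len: "length cs = length ds" by simp
  show "cs = ds"
  proof (rule nth_equalityI[OF len])
    fix i assume "i < length cs"
    then have "tableau_of_chain ds (cs ! i) = Some (Suc i)"
      using tableau_of_chain_nth[of cs i] cs eq by simp
    then show "cs ! i = ds ! i"
      using tableau_of_chain_eq_Some_iff[of ds] ds by auto
  qed
qed

lemma tableau_of_chain_surj:
  assumes inj: "inj_on U (dom U)" and ran: "ran U = {1..n}"
  obtains cs where "distinct cs" "length cs = n" "U = tableau_of_chain cs"
proof -
  have ex1: "\<exists>!c. U c = Some v" if "v \<in> {1..n}" for v
  proof -
    have "v \<in> ran U" using that ran by simp
    then obtain c where c: "U c = Some v" unfolding ran_def by blast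
    moreover have "c' = c" if "U c' = Some v" for c'
      using inj_onD[OF inj] c that by (metis domI)
    ultimately show ?thesis by blast
  qed
  define cs where "cs = map (\<lambda>v. THE c. U c = Some v) [1..<Suc n]"
  have U_nth: "U (cs ! i) = Some (Suc i)" if "i < n" for i
    using theI'[OF ex1[of "Suc i"]] that by (simp add: cs_def del: upt_Suc)
  have "length cs = n" by (simp add: cs_def)
  moreover have "distinct cs"
    unfolding distinct_conv_nth using U_nth \<open>length cs = n\<close> by (metis Suc_inject option.inject)
  moreover have "U c = tableau_of_chain cs c" for c
  proof (cases "U c")
    case None
    have "set cs \<subseteq> dom U"
    proof
      fix c assume "c \<in> set cs"
      then obtain i where "i < n" "cs ! i = c"
        using \<open>length cs = n\<close> by (auto simp: in_set_conv_nth)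
      then show "c \<in> dom U" using U_nth[of i] by auto
    qed
    then show ?thesis using None dom_tableau_of_chain by (metis domIff subsetD)
  next
    case (Some v)
    then have "v \<in> {1..n}" using ran by (auto intro: ranI)
    then have "U (cs ! (v - 1)) = Some v"
      using U_nth[of "v - 1"] by auto
    then have "cs ! (v - 1) = c"
      using ex1[OF \<open>v \<in> {1..n}\<close>] Some by blast
    then have "tableau_of_chain cs c = Some v"
      using \<open>v \<in> {1..n}\<close> tableau_of_chain_eq_Some_iff[OF \<open>distinct cs\<close>] \<open>length cs = n\<close> by simp
    then show ?thesis using Some by simp
  qed
  ultimately show ?thesis using that by blast
qed

lemma dom_subtableau: "dom (subtableau k T) = {c \<in> dom T. the (T c) \<le> k}"
  by (auto simp: subtableau_def split: option.splits if_splits)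

lemma dom_subtableau_tableau_of_chain:
  assumes "distinct cs"
  shows "dom (subtableau k (tableau_of_chain cs)) = set (take k cs)"
  unfolding dom_subtableau dom_tableau_of_chain
proof (intro equalityI subsetI)
  fix c assume "c \<in> {c \<in> set cs. the (tableau_of_chain cs c) \<le> k}"
  then obtain i where "i < length cs" "cs ! i = c" "Suc i \<le> k"
    using tableau_of_chain_nth[OF assms] by (auto simp: in_set_conv_nth)
  then show "c \<in> set (take k cs)" by (auto simp: in_set_conv_nth intro!: exI[of _ i])
next
  fix c assume "c \<in> set (take k cs)"
  then obtain i where "i < length cs" "i < k" "cs ! i = c" by (auto simp: in_set_conv_nth)
  then show "c \<in> {c \<in> set cs. the (tableau_of_chain cs c) \<le> k}"
    using tableau_of_chain_nth[OF assms] by auto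
qed

lemma tableau_of_chain_mono:
  assumes cs: "young_chain {} cs" and ab: "(a, b) \<in> set cs" and "a' \<le> a" "b' \<le> b"
  shows "(a', b') \<in> set cs \<and> the (tableau_of_chain cs (a', b')) \<le> the (tableau_of_chain cs (a, b))"
proof -
  let ?k = "the (tableau_of_chain cs (a, b))"
  have dist: "distinct cs" using young_chain_distinct[OF cs] by simp
  have "young_diagram (set (take ?k cs))"
    using young_chain_take[OF cs young_diagram_empty] by simp
  moreover have "(a, b) \<in> set (take ?k cs)"
    using ab unfolding dom_subtableau_tableau_of_chain[OF dist, symmetric] dom_subtableau dom_tableau_of_chain
    by simp
  ultimately have "(a', b') \<in> set (take ?k cs)"
    using young_diagramD \<open>a' \<le> a\<close> \<open>b' \<le> b\<close> by blast
  then show ?thesis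
    unfolding dom_subtableau_tableau_of_chain[OF dist, symmetric] dom_subtableau dom_tableau_of_chain
    by simp
qed

lemma is_SYT_tableau_of_chain:
  assumes cs: "young_chain {} cs"
  shows "is_SYT (length cs) (tableau_of_chain cs)"
proof -
  let ?T = "tableau_of_chain cs"
  have dist: "distinct cs" using young_chain_distinct[OF cs] by simp
  have inj: "inj_on (\<lambda>c. the (?T c)) (set cs)"
    by (rule inj_on_the_tableau_of_chain[OF dist])
  then have "inj_on ?T (dom ?T)"
    by (auto simp: inj_on_def dom_tableau_of_chain)
  moreover have less: "the (?T (i', j')) < the (?T (i, j))"
    if "(i, j) \<in> set cs" "i' \<le> i" "j' \<le> j" "(i', j') \<noteq> (i, j)" for i j i' j'
  proof -
    have "(i', j') \<in> set cs" "the (?T (i', j')) \<le> the (?T (i, j))"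
      using tableau_of_chain_mono[OF cs that(1-3)] by simp_all
    moreover have "the (?T (i', j')) \<noteq> the (?T (i, j))"
      using inj_onD[OF inj] that(1,4) \<open>(i', j') \<in> set cs\<close> by blast
    ultimately show ?thesis by simp
  qed
  obtain lam where "is_partition lam" "set cs = ferrers lam"
    using young_diagram_obtains_partition young_chain_young_diagram[OF cs young_diagram_empty] by auto
  ultimately show ?thesis
    unfolding is_SYT_def using ran_tableau_of_chain[OF dist]
    by (auto intro!: less simp: dom_tableau_of_chain)
qed

lemma is_SYT_young_diagram: "is_SYT n U \<Longrightarrow> young_diagram (dom U)"
  unfolding is_SYT_def using young_diagram_ferrers by auto

lemma is_SYT_mono:
  assumes U: "is_SYT n U" and ab: "(a, b) \<in> dom U" and "a' \<le> a" "b' \<le> b"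
  shows "the (U (a', b')) \<le> the (U (a, b))"
proof -
  note D = is_SYT_young_diagram[OF U]
  have row: "the (U (i, j)) \<le> the (U (i, j + d))" if "(i, j + d) \<in> dom U" for i j d
    using that
  proof (induction d)
    case (Suc d)
    then have "(i, j + d) \<in> dom U" using young_diagramD[OF D Suc.prems, of i "j + d"] by simp
    moreover have "the (U (i, j + d)) < the (U (i, Suc (j + d)))"
      using U Suc.prems unfolding is_SYT_def by simp
    ultimately show ?case using Suc.IH by simp
  qed simp
  have col: "the (U (i, j)) \<le> the (U (i + d, j))" if "(i + d, j) \<in> dom U" for i j d
    using that
  proof (induction d)
    case (Suc d)
    then have "(i + d, j) \<in> dom U" using young_diagramD[OF D Suc.prems, of "i + d" j] by simp
    moreover have "the (U (i + d, j)) < the (U (Suc (i + d), j))"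
      using U Suc.prems unfolding is_SYT_def by simp
    ultimately show ?case using Suc.IH by simp
  qed simp
  have "(a', b) \<in> dom U" using young_diagramD[OF D ab \<open>a' \<le> a\<close>] by simp
  then have "the (U (a', b')) \<le> the (U (a', b))"
    using row[of a' b' "b - b'"] \<open>b' \<le> b\<close> by simp
  also have "\<dots> \<le> the (U (a, b))"
    using col[of a' "a - a'" b] ab \<open>a' \<le> a\<close> by simp
  finally show ?thesis .
qed

lemma young_diagram_dom_subtableau:
  assumes U: "is_SYT n U"
  shows "young_diagram (dom (subtableau k U))"
  unfolding young_diagram_def dom_subtableau
proof (intro conjI allI impI)
  note D = is_SYT_young_diagram[OF U]
  show "finite {c \<in> dom U. the (U c) \<le> k}" using young_diagram_finite[OF D] by simp
  fix i j i' j' assume "(i, j) \<in> {c \<in> dom U. the (U c) \<le> k}" "i' \<le> i" "j' \<le> j"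
  then show "(i', j') \<in> {c \<in> dom U. the (U c) \<le> k}"
    using young_diagramD[OF D, of i j i' j'] is_SYT_mono[OF U, of i j i' j'] by auto
qed

lemma is_SYT_obtains_chain:
  assumes U: "is_SYT n U"
  obtains cs where "young_chain {} cs" "length cs = n" "U = tableau_of_chain cs"
proof -
  obtain cs where cs: "distinct cs" "length cs = n" "U = tableau_of_chain cs"
    using tableau_of_chain_surj U unfolding is_SYT_def by blast
  have "young_chain {} cs"
  proof (rule young_chainI)
    show "young_diagram ({} \<union> set (take k cs))" for k
      using young_diagram_dom_subtableau[OF U, of k] dom_subtableau_tableau_of_chain[OF cs(1)] cs(3)
      by simp
  qed (use cs in simp_all)
  then show ?thesis using that cs by blast
qed

lemma card_SYT_eq_card_chains:
  "card {U. is_SYT n U \<and> P U} = card {cs. length cs = n \<and> young_chain {} cs \<and> P (tableau_of_chain cs)}"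
proof -
  have "{U. is_SYT n U \<and> P U} = tableau_of_chain ` {cs. length cs = n \<and> young_chain {} cs \<and> P (tableau_of_chain cs)}"
    using is_SYT_tableau_of_chain by (auto elim!: is_SYT_obtains_chain)
  moreover have "inj_on tableau_of_chain {cs. length cs = n \<and> young_chain {} cs \<and> P (tableau_of_chain cs)}"
    using young_chain_distinct by (auto intro: inj_on_subset[OF inj_on_tableau_of_chain])
  ultimately show ?thesis by (simp add: card_image)
qed

lemma num_SYT_eq_telephone: "num_SYT n = telephone n"
  using card_SYT_eq_card_chains[of n "\<lambda>_. True"]
  by (simp add: num_SYT_def num_up_def chains_up_def flip: num_up_empty_eq_telephone)

lemma chains_down_card:
  assumes "finite F"
  shows "chains_down F (card F) = {cs. young_chain {} cs \<and> set cs = F}"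
proof (intro equalityI subsetI)
  fix cs assume cs: "cs \<in> chains_down F (card F)"
  then have "distinct cs" "set cs \<subseteq> F" "length cs = card F"
    using young_chain_distinct by (auto simp: chains_down_def)
  then have "set cs = F"
    using card_subset_eq[OF assms] distinct_card by metis
  then show "cs \<in> {cs. young_chain {} cs \<and> set cs = F}"
    using cs by (simp add: chains_down_def)
next
  fix cs assume "cs \<in> {cs. young_chain {} cs \<and> set cs = F}"
  then show "cs \<in> chains_down F (card F)"
    using young_chain_distinct distinct_card by (fastforce simp: chains_down_def young_diagram_empty)
qed

lemma num_SYT_shape_eq_num_down: "num_SYT_shape lam = num_down (ferrers lam) (sum_list lam)"
proof -
  have "length cs = sum_list lam" if "young_chain {} cs" "set cs = ferrers lam" for cs
    using distinct_card[of cs] young_chain_distinct[OF that(1)] that(2) by (simp add: card_ferrers)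
  then have "{cs. length cs = sum_list lam \<and> young_chain {} cs \<and> dom (tableau_of_chain cs) = ferrers lam}
      = {cs. young_chain {} cs \<and> set cs = ferrers lam}"
    by (auto simp: dom_tableau_of_chain)
  then show ?thesis
    using card_SYT_eq_card_chains[of "sum_list lam" "\<lambda>U. dom U = ferrers lam"]
    by (simp add: num_SYT_shape_def num_down_def chains_down_card finite_ferrers flip: card_ferrers)
qed

section \<open>Tableaux with a subtableau of given shape\<close>

definition chains_through :: "nat \<Rightarrow> (nat \<times> nat) set \<Rightarrow> (nat \<times> nat) list set" where
  "chains_through n F = {cs. length cs = n \<and> young_chain {} cs \<and> set (take (card F) cs) = F}"

lemma card_chains_through:
  assumes F: "young_diagram F" and "card F \<le> n"
  shows "card (chains_through n F) = num_down F (card F) * num_up F (n - card F)"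
proof -
  let ?k = "card F"
  have len: "length xs = ?k" if "xs \<in> chains_down F ?k" for xs
    using that by (simp add: chains_down_def)
  have "chains_through n F = (\<lambda>(xs, ys). xs @ ys) ` (chains_down F ?k \<times> chains_up F (n - ?k))"
  proof (intro equalityI subsetI)
    fix cs assume "cs \<in> chains_through n F"
    then have "take ?k cs \<in> chains_down F ?k" "drop ?k cs \<in> chains_up F (n - ?k)"
      using young_chain_append[of "{}" "take ?k cs" "drop ?k cs"] \<open>?k \<le> n\<close>
      by (auto simp: chains_through_def chains_down_card young_diagram_finite[OF F] chains_up_def)
    then show "cs \<in> (\<lambda>(xs, ys). xs @ ys) ` (chains_down F ?k \<times> chains_up F (n - ?k))"
      by (auto intro!: image_eqI[of _ _ "(take ?k cs, drop ?k cs)"])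
  next
    fix cs assume "cs \<in> (\<lambda>(xs, ys). xs @ ys) ` (chains_down F ?k \<times> chains_up F (n - ?k))"
    then obtain xs ys where "cs = xs @ ys" "xs \<in> chains_down F ?k" "ys \<in> chains_up F (n - ?k)"
      by auto
    then show "cs \<in> chains_through n F"
      using len \<open>?k \<le> n\<close>
      by (auto simp: chains_through_def chains_down_card young_diagram_finite[OF F] chains_up_def
          young_chain_append)
  qed
  moreover have "inj_on (\<lambda>(xs, ys). xs @ ys) (chains_down F ?k \<times> chains_up F (n - ?k))"
    using len by (auto simp: inj_on_def)
  ultimately show ?thesis
    by (simp add: card_image card_cartesian_product num_down_def num_up_def)
qed

lemma chains_through_tendsto:
  assumes F: "young_diagram F"
  shows "(\<lambda>n. card (chains_through n F) / telephone n) \<longlonglongrightarrow> num_down F (card F) ^ 2 / fact (card F)"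
proof (rule LIMSEQ_offset[where k = "card F"])
  have "(\<lambda>m. num_down F (card F) * (num_up F m / telephone (m + card F)))
      \<longlonglongrightarrow> num_down F (card F) * (num_down F (card F) / fact (card F))"
    by (intro tendsto_mult tendsto_const num_up_tendsto[OF F])
  then show "(\<lambda>m. card (chains_through (m + card F) F) / telephone (m + card F))
      \<longlonglongrightarrow> num_down F (card F) ^ 2 / fact (card F)"
    by (simp add: card_chains_through[OF F] power2_eq_square)
qed

lemma chains_through_disjoint:
  assumes "\<not> F \<subseteq> G" "\<not> G \<subseteq> F"
  shows "chains_through n F \<inter> chains_through n G = {}"
proof -
  have False if "cs \<in> chains_through n F" "cs \<in> chains_through n G" for cs
  proof (cases "card F \<le> card G")
    case True
    then have "F \<subseteq> G"
      using that set_take_subset_set_take[OF True, of cs] by (simp add: chains_through_def)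
    then show False using assms(1) by blast
  next
    case False
    then have "G \<subseteq> F"
      using that set_take_subset_set_take[of "card G" "card F" cs] by (simp add: chains_through_def)
    then show False using assms(2) by blast
  qed
  then show ?thesis by blast
qed

lemma distinct_ex_set_take_eq_iff:
  assumes "distinct cs"
  shows "(\<exists>k\<le>length cs. set (take k cs) = F) \<longleftrightarrow> set (take (card F) cs) = F"
proof
  assume "\<exists>k\<le>length cs. set (take k cs) = F"
  then obtain k where "k \<le> length cs" "set (take k cs) = F" by blast
  moreover have "card (set (take k cs)) = k"
    using assms \<open>k \<le> length cs\<close> by (simp add: distinct_card)
  ultimately show "set (take (card F) cs) = F" by simp
next
  assume F: "set (take (card F) cs) = F"
  have "card F \<le> length cs"
    using card_length[of "take (card F) cs"] F by simp
  then show "\<exists>k\<le>length cs. set (take k cs) = F" using F by blast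
qed

lemma ex_subtableau_iff_chains_through:
  assumes "young_chain {} cs"
  shows "(\<exists>k\<le>length cs. dom (subtableau k (tableau_of_chain cs)) = F) \<longleftrightarrow> cs \<in> chains_through (length cs) F"
proof -
  have "distinct cs" using young_chain_distinct[OF assms] by simp
  then show ?thesis
    using distinct_ex_set_take_eq_iff assms
    by (simp add: dom_subtableau_tableau_of_chain chains_through_def)
qed

lemma N_avoid_eq_sum_chains_through:
  assumes antichain: "\<And>lam mu. lam \<in> set L \<Longrightarrow> mu \<in> set L \<Longrightarrow> lam \<noteq> mu \<Longrightarrow> \<not> subshape lam mu"
  shows "N_avoid n L = (\<Sum>lam\<in>set L. card (chains_through n (ferrers lam)))"
proof -
  have "N_avoid n L = card {cs. length cs = n \<and> young_chain {} cs \<and>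
      (\<exists>k\<le>n. \<exists>lam\<in>set L. dom (subtableau k (tableau_of_chain cs)) = ferrers lam)}"
    unfolding N_avoid_def by (rule card_SYT_eq_card_chains)
  also have "{cs. length cs = n \<and> young_chain {} cs \<and>
      (\<exists>k\<le>n. \<exists>lam\<in>set L. dom (subtableau k (tableau_of_chain cs)) = ferrers lam)}
      = (\<Union>lam\<in>set L. chains_through n (ferrers lam))"
  proof (intro equalityI subsetI)
    fix cs assume "cs \<in> {cs. length cs = n \<and> young_chain {} cs \<and>
      (\<exists>k\<le>n. \<exists>lam\<in>set L. dom (subtableau k (tableau_of_chain cs)) = ferrers lam)}"
    then obtain k lam where cs: "length cs = n" "young_chain {} cs" and "k \<le> n" "lam \<in> set L"
      and "dom (subtableau k (tableau_of_chain cs)) = ferrers lam" by blast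
    then have "cs \<in> chains_through n (ferrers lam)"
      using ex_subtableau_iff_chains_through[OF cs(2), of "ferrers lam"] by auto
    then show "cs \<in> (\<Union>lam\<in>set L. chains_through n (ferrers lam))"
      using \<open>lam \<in> set L\<close> by blast
  next
    fix cs assume "cs \<in> (\<Union>lam\<in>set L. chains_through n (ferrers lam))"
    then obtain lam where "lam \<in> set L" and cs: "cs \<in> chains_through n (ferrers lam)" by blast
    then have "length cs = n" "young_chain {} cs" by (simp_all add: chains_through_def)
    then show "cs \<in> {cs. length cs = n \<and> young_chain {} cs \<and>
      (\<exists>k\<le>n. \<exists>lam\<in>set L. dom (subtableau k (tableau_of_chain cs)) = ferrers lam)}"
      using ex_subtableau_iff_chains_through[of cs "ferrers lam"] cs \<open>lam \<in> set L\<close> by auto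
  qed
  also have "card \<dots> = (\<Sum>lam\<in>set L. card (chains_through n (ferrers lam)))"
  proof (rule card_UN_disjoint)
    have "chains_through n F \<subseteq> chains_up {} n" for F
      by (auto simp: chains_through_def chains_up_def)
    then show "\<forall>lam\<in>set L. finite (chains_through n (ferrers lam))"
      using finite_chains_up[OF young_diagram_empty] finite_subset by blast
    show "\<forall>lam\<in>set L. \<forall>mu\<in>set L. lam \<noteq> mu \<longrightarrow>
        chains_through n (ferrers lam) \<inter> chains_through n (ferrers mu) = {}"
      using antichain by (auto intro!: chains_through_disjoint simp: subshape_def)
  qed simp
  finally show ?thesis .
qed

theorem corollary2:
  fixes L :: "nat list list"
  assumes "\<forall>lam\<in>set L. is_partition lam"
    and "\<forall>i<length L. \<forall>j<length L. i \<noteq> j \<longrightarrow> \<not> subshape (L ! i) (L ! j)"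
  shows "(\<lambda>n. real (N_avoid n L) / real (num_SYT n))
           \<longlonglongrightarrow> (\<Sum>lam\<leftarrow>L. real (num_SYT_shape lam) ^ 2 / fact (sum_list lam))"
proof -
  have "distinct L"
    unfolding distinct_conv_nth
  proof (intro allI impI)
    fix i j assume "i < length L" "j < length L" "i \<noteq> j"
    then have "\<not> subshape (L ! i) (L ! j)" using assms(2) by blast
    then show "L ! i \<noteq> L ! j" by (auto simp: subshape_def)
  qed
  have antichain: "\<not> subshape lam mu" if "lam \<in> set L" "mu \<in> set L" "lam \<noteq> mu" for lam mu
    using assms(2) that by (auto simp: in_set_conv_nth)
  have "(\<lambda>n. \<Sum>lam\<in>set L. card (chains_through n (ferrers lam)) / telephone n)
      \<longlonglongrightarrow> (\<Sum>lam\<in>set L. num_down (ferrers lam) (card (ferrers lam)) ^ 2 / fact (card (ferrers lam)))"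
    using assms(1) by (intro tendsto_sum chains_through_tendsto young_diagram_ferrers) simp
  then show ?thesis
    by (simp add: N_avoid_eq_sum_chains_through[OF antichain] num_SYT_eq_telephone sum_divide_distrib
        num_SYT_shape_eq_num_down card_ferrers sum_list_distinct_conv_sum_set[OF \<open>distinct L\<close>])
qed

end
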